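(* Let $C_{\vec B}$ be a Cantor set with CDF $F_{\vec B}$. For every irrational $x\in[0,1]$, $x\in C_{\vec B}$ if and only if $F_{\vec B}(x)$ is irrational.
   Context: A Cantor set is specified by a binary digit vector $\vec B=(b_0,\dots,b_{N-1})\in\{0,1\}^N$ with $N\ge3$ and $2\le\|\vec B\|:=\sum_i b_i\le N-1$; its digit set is $D=\{i:b_i=1\}$. With $\phi_d(x)=(x+d)/N$ for $d\in D$, $C_{\vec B}\subset[0,1]$ is the unique nonempty compact set with $C_{\vec B}=\bigcup_{d\in D}\phi_d(C_{\vec B})$, and $\mu_{\vec B}$ is the unique Borel probability measure with $\mu_{\vec B}=\frac{1}{\|\vec B\|}\sum_{d\in D}\mu_{\vec B}\circ\phi_d^{-1}$. The CDF is $F_{\vec B}(x)=\mu_{\vec B}([0,x])$, $x\in[0,1]$. *)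

theory Defs
  imports "HOL-Probability.Probability"
begin

definition cantor_vec :: "nat list \<Rightarrow> bool" where
  "cantor_vec B \<longleftrightarrow> length B \<ge> 3 \<and> set B \<subseteq> {0,1} \<and> 2 \<le> sum_list B \<and> sum_list B \<le> length B - 1"

definition digits :: "nat list \<Rightarrow> nat set" where
  "digits B = {i. i < length B \<and> B ! i = 1}"

definition cphi :: "nat list \<Rightarrow> nat \<Rightarrow> real \<Rightarrow> real" where
  "cphi B d x = (x + real d) / real (length B)"

definition cantor_set :: "nat list \<Rightarrow> real set" where
  "cantor_set B = (THE C. C \<noteq> {} \<and> compact C \<and> C = (\<Union>d\<in>digits B. cphi B d ` C))"

definition cantor_measure :: "nat list \<Rightarrow> real measure" where
  "cantor_measure B = (THE \<mu>. prob_space \<mu> \<and> sets \<mu> = sets borel \<and>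
      (\<forall>A\<in>sets borel. measure \<mu> A =
          (\<Sum>d\<in>digits B. measure \<mu> (cphi B d -` A)) / real (sum_list B)))"

definition cantor_cdf :: "nat list \<Rightarrow> real \<Rightarrow> real" where
  "cantor_cdf B x = measure (cantor_measure B) {0..x}"

end

theory Submission
  imports Defs
begin

(* Expand the points of [0,1) in base N = length B, with first digit a = floor (N y) and shift
   sigma y = N y - a. Read on distribution functions, self-similarity of mu_B becomes

     ||B|| F(y) = r(a) + (if a : D then F(sigma y) else 0),

   where r(a) is the number of digits of D below a. If some digit of x lies outside D, finitely
   many applications of this equation show that F(x) is rational. If all digits of x lie in D,
   which characterises the points of C_B, then v_k = F(sigma^k x) lies strictly between 0 and 1
   and ||B|| v_k = r(a_k) + v_(k+1): the v_k form the orbit of F(x) under v -> frac(||B|| v).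
   For rational F(x) this orbit is finite, so the digits of x, and hence x itself, would be
   eventually periodic and x rational.

   F is constructed as the fixed point of a contraction on distribution functions, which also
   pins down the measure mu_B; C_B is the intersection of the level sets of the iterated
   function system. *)

section \<open>Expansions in base b\<close>

lemma rational_orbit_not_inj:
  fixes v :: "nat \<Rightarrow> real" and a :: "nat \<Rightarrow> int" and m :: nat
  assumes unit: "\<And>k. 0 \<le> v k \<and> v k \<le> 1"
    and step: "\<And>k. m * v k = a k + v (Suc k)" and "v 0 \<in> \<rat>"
  shows "\<not> inj v"
proof -
  obtain p q where "q > 0" and v0: "v 0 = of_int p / of_int q"
    using Rats_cases'[OF \<open>v 0 \<in> \<rat>\<close>] by blast
  have "\<exists>z::int. q * v k = z" for k
  proof (induction k)
    case 0
    show ?case using \<open>q > 0\<close> v0 by (intro exI[of _ p]) simp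
  next
    case (Suc k)
    then obtain z where "q * v k = of_int z" by blast
    have "q * v (Suc k) = m * (q * v k) - q * a k"
      using step[of k] by (simp add: algebra_simps)
    then have "q * v (Suc k) = of_int (m * z - q * a k)"
      using \<open>q * v k = of_int z\<close> by simp
    then show ?case by blast
  qed
  then have scaled: "of_int \<lfloor>q * v k\<rfloor> = q * v k" for k
    by (metis floor_of_int)
  \<comment> \<open>pigeonhole: the numerators lie in \<open>{0..q}\<close>\<close>
  have "\<lfloor>q * v k\<rfloor> \<in> {0..q}" for k
  proof -
    have "0 \<le> q * v k" "q * v k \<le> q * 1"
      using unit[of k] \<open>q > 0\<close> by simp_all
    then show ?thesis by simp linarith
  qed
  then have "range (\<lambda>k. \<lfloor>q * v k\<rfloor>) \<subseteq> {0..q}" by auto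
  then have "finite (range (\<lambda>k. \<lfloor>q * v k\<rfloor>))" by (rule finite_subset) simp
  then have "\<not> inj (\<lambda>k. \<lfloor>q * v k\<rfloor>)" using finite_imageD by auto
  moreover have "inj (\<lambda>k. \<lfloor>q * v k\<rfloor>)" if "inj v"
  proof (rule injI)
    fix k l assume "\<lfloor>q * v k\<rfloor> = \<lfloor>q * v l\<rfloor>"
    then have "q * v k = q * v l" using scaled by metis
    then show "k = l" using \<open>q > 0\<close> injD[OF that] by simp
  qed
  ultimately show ?thesis by blast
qed

lemma eventually_periodic_if_rational:
  fixes v :: "nat \<Rightarrow> real" and a :: "nat \<Rightarrow> int" and m :: nat
  assumes unit: "\<And>k. 0 < v k \<and> v k < 1"
    and step: "\<And>k. m * v k = a k + v (Suc k)" and "v 0 \<in> \<rat>"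
  shows "\<exists>i j. i < j \<and> (\<forall>t. a (i + t) = a (j + t))"
proof -
  have a_floor: "a k = \<lfloor>m * v k\<rfloor>" for k
    using step[of k] unit[of "Suc k"] by (intro floor_unique[symmetric]) auto
  have "\<not> inj v"
    using unit step \<open>v 0 \<in> \<rat>\<close> by (intro rational_orbit_not_inj[where a = a]) (auto simp: less_imp_le)
  then obtain i j where "i \<noteq> j" "v i = v j"
    unfolding inj_def by blast
  have "v (i + t) = v (j + t)" for t
  proof (induction t)
    case (Suc t)
    have "v (Suc (i + t)) = m * v (i + t) - \<lfloor>m * v (i + t)\<rfloor>"
      using step[of "i + t"] a_floor[of "i + t"] by simp
    also have "\<dots> = v (Suc (j + t))"
      using step[of "j + t"] a_floor[of "j + t"] Suc by simp
    finally show ?case by simp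
  qed (simp add: \<open>v i = v j\<close>)
  then have "a (i + t) = a (j + t)" for t using a_floor by simp
  then show ?thesis using \<open>i \<noteq> j\<close> by (metis linorder_neqE_nat)
qed

lemma expansion_step_at_endpoint:
  fixes c v w r :: real
  assumes "c * v = r + w" "0 \<le> r" "r \<le> c - 1" "0 \<le> w" "w \<le> 1" "v \<in> {0, 1}"
  shows "w = v \<and> r = (c - 1) * v"
  using assms by auto

definition adic_shift :: "nat \<Rightarrow> real \<Rightarrow> real" where
  "adic_shift b y = real b * y - \<lfloor>real b * y\<rfloor>"

definition adic_digit :: "nat \<Rightarrow> real \<Rightarrow> nat" where
  "adic_digit b y = nat \<lfloor>real b * y\<rfloor>"

definition adic_orbit :: "nat \<Rightarrow> real \<Rightarrow> nat \<Rightarrow> real" where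
  "adic_orbit b y k = (adic_shift b ^^ k) y"

lemma adic_orbit_0 [simp]: "adic_orbit b y 0 = y"
  by (simp add: adic_orbit_def)

lemma adic_orbit_Suc [simp]: "adic_orbit b y (Suc k) = adic_shift b (adic_orbit b y k)"
  by (simp add: adic_orbit_def)

lemma adic_orbit_add: "adic_orbit b y (i + k) = adic_orbit b (adic_orbit b y i) k"
  by (simp add: adic_orbit_def add.commute[of i k] funpow_add)

lemma adic_orbit_shift: "adic_orbit b (adic_shift b y) k = adic_orbit b y (Suc k)"
  using adic_orbit_add[of b y 1 k] by simp

lemma adic_shift_range: "0 \<le> adic_shift b y \<and> adic_shift b y < 1"
  unfolding adic_shift_def by linarith

lemma adic_digit_bounds:
  fixes y :: real
  assumes "0 \<le> y"
  shows "real (adic_digit b y) \<le> real b * y" "real b * y < real (adic_digit b y) + 1"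
  using assms floor_correct[of "real b * y"] by (simp_all add: adic_digit_def)

lemma adic_shift_eq: "0 \<le> y \<Longrightarrow> adic_shift b y = real b * y - real (adic_digit b y)"
  by (simp add: adic_shift_def adic_digit_def)

lemma adic_orbit_range:
  "y \<in> {0..<1} \<Longrightarrow> adic_orbit b y k \<in> {0..<1}"
  by (cases k) (simp_all add: adic_shift_range)

lemma adic_orbit_minus_int: "\<exists>z::int. adic_orbit b y k = real b ^ k * y - z"
proof (induction k)
  case 0
  show ?case by simp
next
  case (Suc k)
  then obtain z where z: "adic_orbit b y k = real b ^ k * y - of_int z" by blast
  have "adic_orbit b y (Suc k) = real b * adic_orbit b y k - \<lfloor>real b * adic_orbit b y k\<rfloor>"
    by (simp add: adic_shift_def)
  also have "\<dots> = real b ^ Suc k * y - of_int (int b * z + \<lfloor>real b * adic_orbit b y k\<rfloor>)"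
    by (subst (1) z) (simp add: algebra_simps)
  finally show ?case by blast
qed

lemma adic_orbit_irrational:
  assumes "0 < b" "y \<notin> \<rat>"
  shows "adic_orbit b y k \<notin> \<rat>"
proof
  assume "adic_orbit b y k \<in> \<rat>"
  obtain z where "adic_orbit b y k = real b ^ k * y - of_int z"
    using adic_orbit_minus_int by blast
  then have "y = (adic_orbit b y k + z) / real b ^ k" using \<open>0 < b\<close> by simp
  also have "\<dots> \<in> \<rat>" using \<open>adic_orbit b y k \<in> \<rat>\<close> by simp
  finally show False using \<open>y \<notin> \<rat>\<close> by simp
qed

lemma adic_periodic_rational:
  assumes "2 \<le> b" "0 < p" "adic_orbit b y p = y"
  shows "y \<in> \<rat>"
proof -
  obtain z where "adic_orbit b y p = real b ^ p * y - of_int z"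
    using adic_orbit_minus_int by blast
  moreover have "1 < real b ^ p" using assms by (intro one_less_power) auto
  ultimately have "y = z / (real b ^ p - 1)" using assms(3) by (simp add: field_simps)
  then show ?thesis by simp
qed

lemma adic_orbit_diff:
  fixes y z :: real
  assumes "0 \<le> y" "0 \<le> z"
    and "\<And>k. k < t \<Longrightarrow> adic_digit b (adic_orbit b y k) = adic_digit b (adic_orbit b z k)"
  shows "adic_orbit b y t - adic_orbit b z t = real b ^ t * (y - z)"
  using assms(3)
proof (induction t)
  case (Suc t)
  have "0 \<le> adic_orbit b y t" "0 \<le> adic_orbit b z t"
    using assms(1,2) adic_shift_range by (cases t; simp)+
  then have "adic_orbit b y (Suc t) - adic_orbit b z (Suc t) =
      real b * (adic_orbit b y t - adic_orbit b z t)"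
    using Suc.prems[of t] by (simp add: adic_shift_eq algebra_simps)
  also have "\<dots> = real b ^ Suc t * (y - z)"
    using Suc by simp
  finally show ?case .
qed simp

lemma adic_digits_inj:
  assumes "2 \<le> b" "y \<in> {0..<1}" "z \<in> {0..<1}"
    and same: "\<And>k. adic_digit b (adic_orbit b y k) = adic_digit b (adic_orbit b z k)"
  shows "y = z"
proof -
  have "real b ^ t * \<bar>y - z\<bar> \<le> 1" for t
  proof -
    have "\<bar>adic_orbit b y t - adic_orbit b z t\<bar> \<le> 1"
      using adic_orbit_range[of y b t] adic_orbit_range[of z b t] assms(2,3) by auto
    then show ?thesis using adic_orbit_diff[of y z t b] same assms(2,3) by (simp add: abs_mult)
  qed
  then have "\<bar>y - z\<bar> \<le> (1 / real b) ^ t" for t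
    using assms(1) by (simp add: power_one_over field_simps)
  then have "\<bar>y - z\<bar> \<le> 0"
    using assms(1) by (intro LIMSEQ_le_const[OF LIMSEQ_power_zero[of "1 / real b"]]) auto
  then show ?thesis by simp
qed

lemma adic_digits_not_eventually_periodic:
  assumes "2 \<le> b" "x \<in> {0..<1}" "x \<notin> \<rat>" "i < j"
  shows "\<exists>t. adic_digit b (adic_orbit b x (i + t)) \<noteq> adic_digit b (adic_orbit b x (j + t))"
proof (rule ccontr)
  assume "\<nexists>t. adic_digit b (adic_orbit b x (i + t)) \<noteq> adic_digit b (adic_orbit b x (j + t))"
  then have same: "adic_digit b (adic_orbit b (adic_orbit b x i) t) =
      adic_digit b (adic_orbit b (adic_orbit b x j) t)" for t
    by (simp add: adic_orbit_add[symmetric])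
  have "adic_orbit b x i = adic_orbit b x j"
    using assms(1,2) same adic_orbit_range by (intro adic_digits_inj[where b = b]) auto
  moreover have "adic_orbit b (adic_orbit b x i) (j - i) = adic_orbit b x j"
    using adic_orbit_add[of b x i "j - i"] \<open>i < j\<close> by simp
  ultimately have "adic_orbit b (adic_orbit b x i) (j - i) = adic_orbit b x i"
    by simp
  then have "adic_orbit b x i \<in> \<rat>"
    using assms(1,4) by (intro adic_periodic_rational) auto
  then show False using assms(1,3) adic_orbit_irrational by simp
qed

section \<open>Digit vectors\<close>

locale cantor_system =
  fixes B :: "nat list"
  assumes cantor_vec: "cantor_vec B"
begin

abbreviation "N \<equiv> length B"
abbreviation "m \<equiv> sum_list B"
abbreviation "D \<equiv> digits B"

lemma N_ge_3: "3 \<le> N"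
  using cantor_vec unfolding cantor_vec_def by auto

lemma m_ge_2: "2 \<le> m"
  using cantor_vec unfolding cantor_vec_def by auto

lemma N_pos: "0 < real N"
  using N_ge_3 by linarith

lemma m_pos: "0 < real m"
  using m_ge_2 by linarith

text \<open>The simplifier normalises \<open>0 < m\<close> to this form.\<close>
lemma ex_positive_entry [simp]: "\<exists>b\<in>set B. 0 < b"
  using m_ge_2 by (metis gr0I le_zero_eq sum_list_eq_0_iff zero_neq_numeral)

lemma digits_less: "d \<in> D \<Longrightarrow> d < N"
  unfolding digits_def by auto

lemma finite_digits: "finite D"
  using digits_less finite_nat_set_iff_bounded by blast

lemma card_digits: "card D = m"
proof -
  have "B ! i = (if B ! i = 1 then 1 else 0)" if "i < N" for i
  proof -
    have "B ! i \<in> set B" using that by simp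
    then have "B ! i \<in> {0, 1}" using cantor_vec unfolding cantor_vec_def by blast
    then show ?thesis by auto
  qed
  then have "m = (\<Sum>i<N. if B ! i = 1 then 1 else 0)"
    by (simp add: sum_list_sum_nth atLeast0LessThan)
  also have "\<dots> = card D"
    by (simp add: sum.If_cases digits_def Collect_conj_eq lessThan_def Int_commute)
  finally show ?thesis by simp
qed

lemma two_digits: obtains a b where "a \<in> D" "b \<in> D" "a < b"
proof -
  have "\<not> card D \<le> 1" using card_digits m_ge_2 by simp
  then obtain a b where "a \<in> D" "b \<in> D" "a \<noteq> b"
    using card_le_Suc0_iff_eq[OF finite_digits] by auto
  then show ?thesis using that[of a b] that[of b a] by (cases "a < b") auto
qed

lemma cphi_vimage_atMost:
  fixes x :: real
  shows "cphi B d -` {..x} = {..real N * x - real d}"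
  using N_pos by (auto simp: cphi_def field_simps)

lemma mem_cphi_image:
  fixes y :: real
  shows "y \<in> cphi B d ` S \<longleftrightarrow> real N * y - real d \<in> S"
proof -
  have "cphi B d z = y \<longleftrightarrow> z = real N * y - real d" for z
    using N_pos by (auto simp: cphi_def field_simps)
  then show ?thesis by (metis image_iff)
qed

definition rank :: "nat \<Rightarrow> nat" where
  "rank a = card {d \<in> D. d < a}"

lemma rank_less: "a \<in> D \<Longrightarrow> rank a < m"
proof -
  assume "a \<in> D"
  then have "{d \<in> D. d < a} \<subset> D" by auto
  then show ?thesis unfolding rank_def card_digits[symmetric] by (intro psubset_card_mono finite_digits)
qed

lemma rank_inj: "inj_on rank D"
proof -
  have "rank a < rank b" if "a \<in> D" "a < b" for a b
  proof -
    have "{d \<in> D. d < a} \<subset> {d \<in> D. d < b}" using that by auto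
    then show ?thesis unfolding rank_def using finite_digits by (intro psubset_card_mono) auto
  qed
  then show ?thesis by (intro inj_onI) (metis less_irrefl linorder_cases)
qed

end

section \<open>The self-similarity operator on distribution functions\<close>

lemma sum_abs_shifts_unit_support_le:
  fixes h :: "real \<Rightarrow> real" and D :: "nat set"
  assumes "finite D"
    and support: "\<And>y. y \<notin> {0..<1} \<Longrightarrow> h y = 0" and bound: "\<And>y. \<bar>h y\<bar> \<le> \<delta>"
  shows "(\<Sum>d\<in>D. \<bar>h (t - real d)\<bar>) \<le> \<delta>"
proof -
  have "(\<Sum>d\<in>D. \<bar>h (t - real d)\<bar>) = (\<Sum>d\<in>D \<inter> {nat \<lfloor>t\<rfloor>}. \<bar>h (t - real d)\<bar>)"
  proof (rule sum.mono_neutral_right)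
    show "\<forall>d\<in>D - D \<inter> {nat \<lfloor>t\<rfloor>}. \<bar>h (t - real d)\<bar> = 0"
    proof
      fix d assume "d \<in> D - D \<inter> {nat \<lfloor>t\<rfloor>}"
      then have "\<lfloor>t\<rfloor> \<noteq> int d" by auto
      then have "t - real d \<notin> {0..<1}" by (auto simp: floor_unique)
      then show "\<bar>h (t - real d)\<bar> = 0" using support by simp
    qed
  qed (use \<open>finite D\<close> in auto)
  also have "\<dots> \<le> \<delta>"
    using bound[of "t - real (nat \<lfloor>t\<rfloor>)"] bound[of 0]
    by (cases "nat \<lfloor>t\<rfloor> \<in> D") (auto simp: Int_insert_right)
  finally show ?thesis .
qed

context cantor_system
begin

definition self_sim :: "(real \<Rightarrow> real) \<Rightarrow> real \<Rightarrow> real" where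
  "self_sim g x = (\<Sum>d\<in>D. g (real N * x - real d)) / real m"

lemma self_sim_diff: "self_sim f x - self_sim g x = self_sim (\<lambda>y. f y - g y) x"
  by (simp add: self_sim_def sum_subtractf diff_divide_distrib)

lemma abs_self_sim_le:
  assumes "\<And>y. y \<notin> {0..<1} \<Longrightarrow> h y = 0" "\<And>y. \<bar>h y\<bar> \<le> \<delta>"
  shows "\<bar>self_sim h x\<bar> \<le> \<delta> / real m"
proof -
  have "\<bar>\<Sum>d\<in>D. h (real N * x - real d)\<bar> \<le> (\<Sum>d\<in>D. \<bar>h (real N * x - real d)\<bar>)"
    by (rule sum_abs)
  also have "\<dots> \<le> \<delta>"
    using finite_digits assms by (rule sum_abs_shifts_unit_support_le)
  finally show ?thesis
    unfolding self_sim_def abs_divide abs_of_nat by (rule divide_right_mono) simp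
qed

lemma self_sim_bcontfun: "self_sim (apply_bcontfun f) \<in> bcontfun"
proof (rule bcontfun_normI)
  show "continuous_on UNIV (self_sim (apply_bcontfun f))"
    unfolding self_sim_def
    by (intro continuous_intros continuous_on_compose2[OF continuous_on_apply_bcontfun]) auto
next
  fix x
  have "\<bar>\<Sum>d\<in>D. apply_bcontfun f (real N * x - real d)\<bar> \<le> (\<Sum>d\<in>D. norm f)"
    using norm_bounded[of f] by (intro order.trans[OF sum_abs sum_mono]) simp
  then show "norm (self_sim (apply_bcontfun f) x) \<le> norm f"
    using card_digits m_pos by (simp add: self_sim_def divide_le_eq abs_divide mult.commute)
qed

definition self_sim_bcf :: "(real \<Rightarrow>\<^sub>C real) \<Rightarrow> (real \<Rightarrow>\<^sub>C real)" where
  "self_sim_bcf f = Bcontfun (self_sim (apply_bcontfun f))"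

lemma apply_self_sim_bcf: "apply_bcontfun (self_sim_bcf f) = self_sim (apply_bcontfun f)"
  unfolding self_sim_bcf_def using self_sim_bcontfun by (simp add: Bcontfun_inverse)

definition unit_cdfs :: "(real \<Rightarrow>\<^sub>C real) set" where
  "unit_cdfs = {f. (\<forall>x\<le>0. apply_bcontfun f x = 0) \<and> (\<forall>x\<ge>1. apply_bcontfun f x = 1) \<and>
    mono (apply_bcontfun f)}"

lemma closed_unit_cdfs: "closed unit_cdfs"
proof -
  have eval: "continuous_on UNIV (\<lambda>f::real \<Rightarrow>\<^sub>C real. apply_bcontfun f x)" for x
    by (rule lipschitz_on_continuous_on[of 1]) (auto intro!: lipschitz_onI dist_bounded)
  show ?thesis
    unfolding unit_cdfs_def mono_def
    by (intro closed_Collect_conj closed_Collect_all closed_Collect_imp open_Collect_const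
        closed_Collect_eq closed_Collect_le eval continuous_on_const)
qed

lemma unit_cdfs_nonempty: "unit_cdfs \<noteq> {}"
proof -
  define g :: "real \<Rightarrow> real" where "g x = max 0 (min 1 x)" for x
  have "g \<in> bcontfun"
    by (rule bcontfun_normI[where b = 1]) (auto simp: g_def intro!: continuous_intros)
  then have "Bcontfun g \<in> unit_cdfs"
    by (auto simp: unit_cdfs_def Bcontfun_inverse g_def mono_def)
  then show ?thesis by auto
qed

lemma self_sim_bcf_unit_cdfs:
  assumes "f \<in> unit_cdfs"
  shows "self_sim_bcf f \<in> unit_cdfs"
proof -
  have f0: "apply_bcontfun f x = 0" if "x \<le> 0" for x
    using assms that by (simp add: unit_cdfs_def)
  have f1: "apply_bcontfun f x = 1" if "x \<ge> 1" for x
    using assms that by (simp add: unit_cdfs_def)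
  have "mono (apply_bcontfun f)"
    using assms by (simp add: unit_cdfs_def)
  have "self_sim (apply_bcontfun f) x = 0" if "x \<le> 0" for x
  proof -
    have "real N * x \<le> 0" using that N_pos by (simp add: mult_nonneg_nonpos)
    then have "real N * x - real d \<le> 0" for d by simp
    then show ?thesis by (simp add: self_sim_def f0)
  qed
  moreover have "self_sim (apply_bcontfun f) x = 1" if "x \<ge> 1" for x
  proof -
    have "1 \<le> real N * x - real d" if "d \<in> D" for d
    proof -
      have "real d + 1 \<le> real N" using digits_less[OF that] by linarith
      moreover have "real N \<le> real N * x" using \<open>x \<ge> 1\<close> N_pos by simp
      ultimately show ?thesis by linarith
    qed
    then show ?thesis using card_digits m_pos by (simp add: self_sim_def f1)
  qed
  moreover have "mono (self_sim (apply_bcontfun f))"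
    unfolding self_sim_def
    by (intro monoI divide_right_mono sum_mono monoD[OF \<open>mono (apply_bcontfun f)\<close>])
      (auto simp: N_pos mult_left_mono)
  ultimately show ?thesis by (simp add: unit_cdfs_def apply_self_sim_bcf)
qed

lemma self_sim_bcf_contraction:
  assumes "f \<in> unit_cdfs" "g \<in> unit_cdfs"
  shows "dist (self_sim_bcf f) (self_sim_bcf g) \<le> 1 / real m * dist f g"
proof (rule dist_bound)
  fix x
  have "\<bar>self_sim (\<lambda>y. apply_bcontfun f y - apply_bcontfun g y) x\<bar> \<le> dist f g / real m"
  proof (rule abs_self_sim_le)
    show "apply_bcontfun f y - apply_bcontfun g y = 0" if "y \<notin> {0..<1}" for y
      using assms that by (auto simp: unit_cdfs_def not_le)
    show "\<bar>apply_bcontfun f y - apply_bcontfun g y\<bar> \<le> dist f g" for y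
      using dist_bounded[of f y g] by (simp add: dist_real_def)
  qed
  then show "dist (apply_bcontfun (self_sim_bcf f) x) (apply_bcontfun (self_sim_bcf g) x) \<le> 1 / real m * dist f g"
    by (simp add: apply_self_sim_bcf dist_real_def self_sim_diff)
qed

definition F :: "real \<Rightarrow> real" where
  "F = apply_bcontfun (SOME f. f \<in> unit_cdfs \<and> self_sim_bcf f = f)"

lemma F_props:
  shows F_bcontfun: "F \<in> bcontfun"
    and F_nonpos: "x \<le> 0 \<Longrightarrow> F x = 0"
    and F_ge_1: "1 \<le> x \<Longrightarrow> F x = 1"
    and mono_F: "mono F"
    and self_sim_F: "self_sim F = F"
proof -
  have "\<exists>f. f \<in> unit_cdfs \<and> self_sim_bcf f = f"
  proof (rule ex1_implies_ex[OF Banach_fix])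
    show "Topological_Spaces.complete unit_cdfs"
      using closed_unit_cdfs complete_eq_closed by blast
    show "1 / real m < 1" using m_ge_2 by simp
    show "self_sim_bcf ` unit_cdfs \<subseteq> unit_cdfs"
      using self_sim_bcf_unit_cdfs by blast
  qed (use unit_cdfs_nonempty self_sim_bcf_contraction in auto)
  then obtain f where f: "f \<in> unit_cdfs" "self_sim_bcf f = f" and "F = apply_bcontfun f"
    unfolding F_def by (metis (mono_tags, lifting) someI_ex)
  then show "F \<in> bcontfun" "x \<le> 0 \<Longrightarrow> F x = 0" "1 \<le> x \<Longrightarrow> F x = 1" "mono F" "self_sim F = F"
    by (auto simp: unit_cdfs_def apply_bcontfun simp flip: apply_self_sim_bcf)
qed

lemma self_sim_fixpoint_eq_0:
  assumes support: "\<And>y. y \<notin> {0..<1} \<Longrightarrow> h y = 0" and bound: "\<And>y. \<bar>h y\<bar> \<le> c"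
    and fixed: "self_sim h = h"
  shows "h x = 0"
proof -
  have "\<bar>h y\<bar> \<le> c * (1 / real m) ^ n" for n y
  proof (induction n arbitrary: y)
    case 0
    show ?case using bound by simp
  next
    case (Suc n)
    have "\<bar>self_sim h y\<bar> \<le> c * (1 / real m) ^ n / real m"
      using support Suc by (rule abs_self_sim_le)
    then show ?case using fixed by (simp add: field_simps)
  qed
  then have "\<bar>h x\<bar> \<le> 0"
    using m_ge_2 by (intro LIMSEQ_le_const[OF tendsto_mult_right_zero[OF LIMSEQ_power_zero]]) auto
  then show ?thesis by simp
qed

lemma self_sim_fixpoint_sum:
  assumes "self_sim G = G"
  shows "real m * G y = (\<Sum>d\<in>D. G (real N * y - real d))"
proof -
  have "(\<Sum>d\<in>D. G (real N * y - real d)) / real m = G y"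
    using fun_cong[OF assms, of y] by (simp only: self_sim_def)
  then show ?thesis using m_pos by (simp add: divide_eq_eq)
qed

lemma self_sim_mono_step_above:
  assumes "mono G" "self_sim G = G" "1 \<le> y"
  shows "G (y + 1) \<le> G y"
proof -
  obtain d0 d1 where d0: "d0 \<in> D" "d1 \<in> D" "d0 < d1" by (rule two_digits)
  have far: "y + 1 \<le> real N * y - real d0"
  proof -
    have "real d0 + 2 \<le> real N" using d0 digits_less[of d1] by linarith
    moreover have "(real N - 1) * 1 \<le> (real N - 1) * y"
      using \<open>1 \<le> y\<close> N_ge_3 by (intro mult_left_mono) auto
    ultimately show ?thesis by (simp add: algebra_simps)
  qed
  have near: "y \<le> real N * y - real d" if "d \<in> D" for d
  proof -
    have "real d + 1 \<le> real N" using digits_less[OF that] by linarith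
    moreover have "(real N - 1) * 1 \<le> (real N - 1) * y"
      using \<open>1 \<le> y\<close> N_ge_3 by (intro mult_left_mono) auto
    ultimately show ?thesis by (simp add: algebra_simps)
  qed
  have "G (y + 1) + (real m - 1) * G y = G (y + 1) + (\<Sum>d\<in>D - {d0}. G y)"
    using d0(1) card_digits finite_digits m_ge_2 by (simp add: of_nat_diff)
  also have "\<dots> \<le> G (real N * y - real d0) + (\<Sum>d\<in>D - {d0}. G (real N * y - real d))"
    using far near by (intro add_mono sum_mono monoD[OF \<open>mono G\<close>]) auto
  also have "\<dots> = real m * G y"
    using self_sim_fixpoint_sum[OF \<open>self_sim G = G\<close>] d0(1) finite_digits by (simp add: sum.remove)
  finally show ?thesis by (simp add: algebra_simps)
qed

lemma self_sim_mono_step_below: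
  assumes "mono G" "self_sim G = G" "y < 0"
  shows "G y \<le> G (y - 1)"
proof -
  obtain d0 d1 where d1: "d0 \<in> D" "d1 \<in> D" "d0 < d1" by (rule two_digits)
  have near: "real N * y - real d \<le> y" for d
  proof -
    have "(real N - 1) * y \<le> (real N - 1) * 0"
      using \<open>y < 0\<close> N_ge_3 by (intro mult_left_mono) auto
    then show ?thesis by (simp add: algebra_simps)
  qed
  then have far: "real N * y - real d1 \<le> y - 1"
    using near[of 0] d1 by simp
  have "real m * G y = G (real N * y - real d1) + (\<Sum>d\<in>D - {d1}. G (real N * y - real d))"
    using self_sim_fixpoint_sum[OF \<open>self_sim G = G\<close>] d1(2) finite_digits by (simp add: sum.remove)
  also have "\<dots> \<le> G (y - 1) + (\<Sum>d\<in>D - {d1}. G y)"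
    using far near by (intro add_mono sum_mono monoD[OF \<open>mono G\<close>]) auto
  also have "\<dots> = G (y - 1) + (real m - 1) * G y"
    using d1(2) card_digits finite_digits m_ge_2 by (simp add: of_nat_diff)
  finally show ?thesis by (simp add: algebra_simps)
qed

section \<open>Self-similar measures\<close>

definition self_similar_on :: "real measure \<Rightarrow> real set \<Rightarrow> bool" where
  "self_similar_on \<mu> A \<longleftrightarrow> measure \<mu> A = (\<Sum>d\<in>D. measure \<mu> (cphi B d -` A)) / real m"

definition self_similar :: "real measure \<Rightarrow> bool" where
  "self_similar \<mu> \<longleftrightarrow>
    prob_space \<mu> \<and> sets \<mu> = sets borel \<and> (\<forall>A\<in>sets borel. self_similar_on \<mu> A)"

lemma cantor_measure_eq_The: "cantor_measure B = (THE \<mu>. self_similar \<mu>)"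
  unfolding cantor_measure_def self_similar_def self_similar_on_def ..

lemma self_similar_real_distribution: "self_similar \<mu> \<Longrightarrow> real_distribution \<mu>"
  unfolding self_similar_def real_distribution_def real_distribution_axioms_def by blast

lemma self_sim_cdf: "self_similar \<mu> \<Longrightarrow> self_sim (cdf \<mu>) = cdf \<mu>"
  unfolding self_similar_def self_similar_on_def self_sim_def cdf_def2
  by (auto simp: cphi_vimage_atMost)

lemma self_similar_cdf_eq_1:
  assumes "self_similar \<mu>" "1 \<le> x"
  shows "cdf \<mu> x = 1"
proof -
  interpret real_distribution \<mu>
    using assms(1) by (rule self_similar_real_distribution)
  have mono: "mono (cdf \<mu>)" by (simp add: cdf_nondecreasing monoI)
  have shift: "cdf \<mu> (x + real n) \<le> cdf \<mu> x" for n
  proof (induction n)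
    case (Suc n)
    have "cdf \<mu> (x + real n + 1) \<le> cdf \<mu> (x + real n)"
      using assms by (intro self_sim_mono_step_above mono self_sim_cdf) auto
    then show ?case using Suc by (simp add: ac_simps)
  qed simp
  have "cdf \<mu> (real n) \<le> cdf \<mu> x" for n
    using cdf_nondecreasing[of "real n" "x + real n"] shift[of n] assms(2) by linarith
  then have "1 \<le> cdf \<mu> x"
    by (intro LIMSEQ_le_const2[OF cdf_lim_infty_prob]) auto
  then show ?thesis using cdf_bounded_prob[of x] by simp
qed

lemma self_similar_cdf_eq_0:
  assumes "self_similar \<mu>" "x < 0"
  shows "cdf \<mu> x = 0"
proof -
  interpret real_distribution \<mu>
    using assms(1) by (rule self_similar_real_distribution)
  have mono: "mono (cdf \<mu>)" by (simp add: cdf_nondecreasing monoI)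
  have shift: "cdf \<mu> x \<le> cdf \<mu> (x - real n)" for n
  proof (induction n)
    case (Suc n)
    have "cdf \<mu> (x - real n) \<le> cdf \<mu> (x - real n - 1)"
      using assms by (intro self_sim_mono_step_below mono self_sim_cdf) auto
    then show ?case using Suc by (simp add: algebra_simps)
  qed simp
  have "cdf \<mu> x \<le> cdf \<mu> (- real n)" for n
    using cdf_nondecreasing[of "x - real n" "- real n"] shift[of n] assms(2) by linarith
  then have "cdf \<mu> x \<le> 0"
    by (intro LIMSEQ_le_const[OF cdf_lim_neg_infty]) auto
  then show ?thesis using cdf_nonneg[of x] by simp
qed

lemma F_range: "0 \<le> F y \<and> F y \<le> 1"
  using monoD[OF mono_F, of 0 y] monoD[OF mono_F, of y 1] F_nonpos[of 0] F_ge_1[of 1]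
    F_nonpos[of y] F_ge_1[of y] by (cases "0 \<le> y"; cases "y \<le> 1") auto

lemma self_similar_cdf_eq_F:
  assumes "self_similar \<mu>"
  shows "cdf \<mu> = F"
proof
  fix x
  interpret real_distribution \<mu>
    using assms by (rule self_similar_real_distribution)
  have "cdf \<mu> x - F x = 0"
  proof (rule self_sim_fixpoint_eq_0[where h = "\<lambda>y. cdf \<mu> y - F y"])
    show "cdf \<mu> y - F y = 0" if "y \<notin> {0..<1}" for y
      using that self_similar_cdf_eq_0[OF assms] self_similar_cdf_eq_1[OF assms] F_nonpos F_ge_1
      by (auto simp: not_le not_less)
    show "\<bar>cdf \<mu> y - F y\<bar> \<le> 1" for y
      using F_range[of y] cdf_nonneg[of y] cdf_bounded_prob[of y] by linarith
    show "self_sim (\<lambda>y. cdf \<mu> y - F y) = (\<lambda>y. cdf \<mu> y - F y)"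
      using self_sim_cdf[OF assms] self_sim_F by (auto simp: self_sim_diff[symmetric])
  qed
  then show "cdf \<mu> x = F x" by simp
qed

lemma cphi_measurable [measurable]: "cphi B d \<in> borel_measurable borel"
  unfolding cphi_def by measurable

lemma self_similar_on_compl:
  assumes "real_distribution \<mu>" "A \<in> sets borel" "self_similar_on \<mu> A"
  shows "self_similar_on \<mu> (UNIV - A)"
proof -
  interpret real_distribution \<mu> by fact
  have "measure \<mu> (cphi B d -` (UNIV - A)) = 1 - measure \<mu> (cphi B d -` A)" for d
    using prob_compl[of "cphi B d -` A"] measurable_sets_borel[OF cphi_measurable assms(2)]
    by (simp add: vimage_Diff)
  then have "(\<Sum>d\<in>D. measure \<mu> (cphi B d -` (UNIV - A))) =
      real m - (\<Sum>d\<in>D. measure \<mu> (cphi B d -` A))"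
    using card_digits by (simp add: sum_subtractf)
  then show ?thesis
    using assms(3) prob_compl[of A] assms(2) m_pos
    by (simp add: self_similar_on_def diff_divide_distrib)
qed

lemma self_similar_on_disjoint_UN:
  fixes A :: "nat \<Rightarrow> real set"
  assumes "real_distribution \<mu>" "range A \<subseteq> sets borel" "disjoint_family A"
    and "\<And>i. self_similar_on \<mu> (A i)"
  shows "self_similar_on \<mu> (\<Union>i. A i)"
proof -
  interpret real_distribution \<mu> by fact
  have "disjoint_family (\<lambda>i. cphi B d -` A i)" for d
    using assms(3) by (auto simp: disjoint_family_on_def)
  then have "(\<lambda>i. measure \<mu> (cphi B d -` A i)) sums measure \<mu> (cphi B d -` (\<Union>i. A i))" for d
    unfolding vimage_UN using assms(2) measurable_sets_borel[OF cphi_measurable]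
    by (intro finite_measure_UNION) auto
  then have "(\<lambda>i. (\<Sum>d\<in>D. measure \<mu> (cphi B d -` A i)) / real m) sums
      ((\<Sum>d\<in>D. measure \<mu> (cphi B d -` (\<Union>i. A i))) / real m)"
    by (intro sums_divide sums_sum)
  moreover have "(\<lambda>i. measure \<mu> (A i)) sums measure \<mu> (\<Union>i. A i)"
    using assms(2,3) by (intro finite_measure_UNION) auto
  ultimately show ?thesis
    using assms(4) sums_unique2 by (simp add: self_similar_on_def)
qed

lemma self_similar_if_cdf:
  assumes "real_distribution \<mu>" and cdf_fixed: "self_sim (cdf \<mu>) = cdf \<mu>"
  shows "self_similar \<mu>"
proof -
  interpret real_distribution \<mu> by fact
  have borel_atMost: "sets borel = sigma_sets UNIV (range (atMost :: real \<Rightarrow> _))"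
    by (simp add: borel_eq_atMost sets_measure_of)
  have "self_similar_on \<mu> A" if "A \<in> sigma_sets UNIV (range atMost)" for A
  proof -
    have "Int_stable (range (atMost :: real \<Rightarrow> _))"
      by (auto simp: Int_stable_def)
    moreover have "range atMost \<subseteq> Pow UNIV" by simp
    ultimately show ?thesis using that
    proof (induct rule: sigma_sets_induct_disjoint)
      case (basic A)
      then obtain a where "A = {..a}" by auto
      then show ?case
        using fun_cong[OF cdf_fixed, of a]
        by (simp add: self_similar_on_def self_sim_def cdf_def2 cphi_vimage_atMost)
    next
      case (compl A)
      then show ?case
        using assms(1) by (intro self_similar_on_compl) (simp_all add: borel_atMost)
    next
      case (union A)
      then show ?case
        using assms(1) by (intro self_similar_on_disjoint_UN) (auto simp: borel_atMost)
    qed (simp add: self_similar_on_def)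
  qed
  then show ?thesis
    unfolding self_similar_def using prob_space_axioms events_eq_borel borel_atMost by simp
qed

lemma self_similar_cantor_measure: "self_similar (cantor_measure B)"
proof -
  have F_cont: "continuous (at_right x) F" for x
    using F_bcontfun continuous_on_eq_continuous_at continuous_at_imp_continuous_at_within
    unfolding bcontfun_def by blast
  have F_bot: "(F \<longlongrightarrow> 0) at_bot"
    by (rule tendsto_eventually) (auto simp: eventually_at_bot_linorder intro!: exI[of _ 0] F_nonpos)
  have F_top: "(F \<longlongrightarrow> 1) at_top"
    by (rule tendsto_eventually) (auto simp: eventually_at_top_linorder intro!: exI[of _ 1] F_ge_1)
  have rd: "real_distribution (interval_measure F)"
    using mono_F F_cont F_bot F_top by (intro real_distribution_interval_measure) (auto dest: monoD)
  have cdf: "cdf (interval_measure F) = F"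
    using mono_F F_cont F_bot by (intro cdf_interval_measure) (auto dest: monoD)
  have "self_similar (interval_measure F)"
    using rd self_sim_F by (intro self_similar_if_cdf) (simp_all add: cdf)
  moreover have "\<mu> = interval_measure F" if "self_similar \<mu>" for \<mu>
    using cdf_unique[OF self_similar_real_distribution[OF that] rd]
      self_similar_cdf_eq_F[OF that] cdf by simp
  ultimately have "\<exists>!\<mu>. self_similar \<mu>" by blast
  then show ?thesis
    unfolding cantor_measure_eq_The by (rule theI')
qed

lemma cantor_cdf_eq_F:
  assumes "0 \<le> x"
  shows "cantor_cdf B x = F x"
proof -
  interpret real_distribution "cantor_measure B"
    using self_similar_cantor_measure by (rule self_similar_real_distribution)
  have cdf: "cdf (cantor_measure B) = F"
    using self_similar_cantor_measure by (rule self_similar_cdf_eq_F)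
  have "prob {..<0} \<le> prob {..0}"
    by (intro finite_measure_mono) auto
  also have "\<dots> = 0"
    using fun_cong[OF cdf, of 0] F_nonpos[of 0] by (simp add: cdf_def2)
  finally have "prob {..<0} = 0" by (simp add: measure_le_0_iff)
  moreover have "prob {..x} = prob {..<0} + prob {0..x}"
    using assms by (subst finite_measure_Union[symmetric]) (auto intro!: arg_cong[where f = prob])
  ultimately show ?thesis
    using fun_cong[OF cdf, of x] by (simp add: cantor_cdf_def cdf_def2)
qed

section \<open>The attractor\<close>

primrec level :: "nat \<Rightarrow> real set" where
  "level 0 = {0..1}"
| "level (Suc n) = (\<Union>d\<in>D. cphi B d ` level n)"

definition attractor :: "real set" where
  "attractor = (\<Inter>n. level n)"

lemma cphi_unit_interval:
  assumes "y \<in> {0..1}" "d \<in> D"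
  shows "cphi B d y \<in> {0..1}"
proof -
  have "real d + 1 \<le> real N" using digits_less[OF assms(2)] by linarith
  then show ?thesis using assms(1) N_pos by (auto simp: cphi_def field_simps)
qed

lemma level_Suc_subset: "level (Suc n) \<subseteq> level n"
proof (induction n)
  case 0
  show ?case using cphi_unit_interval by auto
next
  case (Suc n)
  then show ?case by (simp only: level.simps) blast
qed

lemma level_antimono: "n \<le> n' \<Longrightarrow> level n' \<subseteq> level n"
  by (rule lift_Suc_antimono_le[of level]) (rule level_Suc_subset)

lemma compact_level: "compact (level n)"
proof (induction n)
  case (Suc n)
  have "continuous_on (level n) (cphi B d)" for d
    unfolding cphi_def using N_pos by (intro continuous_intros) auto
  then have "compact (cphi B d ` level n)" for d
    using Suc by (rule compact_continuous_image)
  then show ?case using finite_digits by (simp add: compact_UN)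
qed simp

lemma level_nonempty: "level n \<noteq> {}"
proof (induction n)
  case (Suc n)
  obtain d d' where "d \<in> D" "d' \<in> D" "d < d'" by (rule two_digits)
  moreover obtain z where "z \<in> level n" using Suc by blast
  ultimately have "cphi B d z \<in> level (Suc n)" by auto
  then show ?case by blast
qed simp

lemma attractor_nonempty: "attractor \<noteq> {}"
  unfolding attractor_def by (rule compact_nest[OF compact_level level_nonempty level_antimono])

lemma compact_attractor: "compact attractor"
proof -
  have "closed (\<Inter>n. level n)"
    by (intro closed_INT) (auto intro: compact_imp_closed compact_level)
  then have "compact ((\<Inter>n. level n) \<inter> level 0)"
    using compact_level by (rule closed_Int_compact)
  moreover have "(\<Inter>n. level n) \<inter> level 0 = attractor"
    unfolding attractor_def by blast
  ultimately show ?thesis by simp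
qed

lemma attractor_subset: "attractor \<subseteq> {0..1}"
  unfolding attractor_def by (metis INT_lower UNIV_I level.simps(1))

lemma mem_level_Suc: "y \<in> level (Suc n) \<longleftrightarrow> (\<exists>d\<in>D. real N * y - real d \<in> level n)"
  by (simp add: mem_cphi_image)

lemma attractor_self_similar: "attractor = (\<Union>d\<in>D. cphi B d ` attractor)"
proof
  show "attractor \<subseteq> (\<Union>d\<in>D. cphi B d ` attractor)"
  proof
    fix y assume y: "y \<in> attractor"
    define S where "S d = {n. real N * y - real d \<in> level n}" for d
    have "n \<in> (\<Union>d\<in>D. S d)" for n
      using y mem_level_Suc[of y n] unfolding attractor_def S_def by blast
    then have "(\<Union>d\<in>D. S d) = UNIV" by blast
    \<comment> \<open>\<open>D\<close> is finite, so one branch \<open>d\<close> occurs at infinitely many levels, hence at all\<close>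
    then obtain d where d: "d \<in> D" "infinite (S d)"
      using finite_digits by (metis finite_UN infinite_UNIV_nat)
    have "real N * y - real d \<in> level n" for n
    proof -
      obtain n' where "n \<le> n'" "n' \<in> S d"
        using d(2) unfolding infinite_nat_iff_unbounded_le by blast
      then show ?thesis using level_antimono unfolding S_def by blast
    qed
    then show "y \<in> (\<Union>d\<in>D. cphi B d ` attractor)"
      using d(1) by (auto simp: mem_cphi_image attractor_def)
  qed
next
  have "cphi B d z \<in> level n" if "d \<in> D" "z \<in> attractor" for d z n
  proof -
    have "cphi B d z \<in> level (Suc n)" using that unfolding attractor_def by auto
    then show ?thesis using level_Suc_subset by blast
  qed
  then show "(\<Union>d\<in>D. cphi B d ` attractor) \<subseteq> attractor"
    unfolding attractor_def by blast
qed

lemma cphi_dist: "\<bar>cphi B d y - cphi B d z\<bar> = \<bar>y - z\<bar> / real N"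
proof -
  have "cphi B d y - cphi B d z = (y - z) / real N"
    using N_pos by (simp add: cphi_def field_simps)
  then show ?thesis using N_pos by (simp add: abs_divide)
qed

lemma subset_if_invariant:
  assumes K: "K \<subseteq> (\<Union>d\<in>D. cphi B d ` K)" "bounded K"
    and L: "\<And>d. d \<in> D \<Longrightarrow> cphi B d ` L \<subseteq> L" "closed L" "L \<noteq> {}"
  shows "K \<subseteq> L"
proof
  obtain z0 where "z0 \<in> L" using L(3) by blast
  obtain R where R: "\<And>a. a \<in> K \<Longrightarrow> \<bar>a - z0\<bar> \<le> R"
    using K(2) unfolding bounded_any_center[of _ z0] by (auto simp: dist_real_def abs_minus_commute)
  have approx: "\<forall>y\<in>K. \<exists>z\<in>L. \<bar>y - z\<bar> \<le> R * (1 / real N) ^ n" for n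
  proof (induction n)
    case 0
    show ?case using R \<open>z0 \<in> L\<close> by auto
  next
    case (Suc n)
    show ?case
    proof
      fix y assume "y \<in> K"
      then obtain d y' where "d \<in> D" "y' \<in> K" "y = cphi B d y'" using K(1) by blast
      moreover obtain z where "z \<in> L" "\<bar>y' - z\<bar> \<le> R * (1 / real N) ^ n"
        using Suc \<open>y' \<in> K\<close> by blast
      ultimately have "cphi B d z \<in> L" "\<bar>y - cphi B d z\<bar> \<le> R * (1 / real N) ^ Suc n"
        using L(1) N_pos by (auto simp: cphi_dist divide_right_mono)
      then show "\<exists>z\<in>L. \<bar>y - z\<bar> \<le> R * (1 / real N) ^ Suc n" by blast
    qed
  qed
  fix y assume "y \<in> K"
  have "infdist y L \<le> R * (1 / real N) ^ n" for n
  proof -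
    obtain z where "z \<in> L" "\<bar>y - z\<bar> \<le> R * (1 / real N) ^ n"
      using approx[of n] \<open>y \<in> K\<close> by blast
    then show ?thesis using infdist_le[of z L y] by (simp add: dist_real_def)
  qed
  then have "infdist y L \<le> 0"
    using N_pos N_ge_3 by (intro LIMSEQ_le_const[OF tendsto_mult_right_zero[OF LIMSEQ_power_zero]]) auto
  then show "y \<in> L"
    using L(2,3) infdist_nonneg[of y L] by (simp add: in_closed_iff_infdist_zero)
qed

lemma cantor_set_eq_attractor: "cantor_set B = attractor"
  unfolding cantor_set_def
proof (rule the_equality)
  show "attractor \<noteq> {} \<and> compact attractor \<and> attractor = (\<Union>d\<in>D. cphi B d ` attractor)"
    using attractor_nonempty compact_attractor attractor_self_similar by blast
  fix K assume K: "K \<noteq> {} \<and> compact K \<and> K = (\<Union>d\<in>D. cphi B d ` K)"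
  have "K \<subseteq> attractor" "attractor \<subseteq> K"
    by (rule subset_if_invariant;
        use K attractor_nonempty compact_attractor attractor_self_similar
        in \<open>auto intro: compact_imp_closed compact_imp_bounded\<close>)+
  then show "K = attractor" by blast
qed

lemma cphi_digit_shift: "0 \<le> y \<Longrightarrow> cphi B (adic_digit N y) (adic_shift N y) = y"
  using N_pos by (simp add: cphi_def adic_shift_eq)

lemma attractor_digit_shift:
  assumes "y \<in> attractor" "y \<notin> \<rat>"
  shows "adic_digit N y \<in> D \<and> adic_shift N y \<in> attractor"
proof -
  obtain d z where d: "d \<in> D" "z \<in> attractor" "y = cphi B d z"
    using assms(1) attractor_self_similar by blast
  have "z \<noteq> 1"
  proof
    assume "z = 1"
    then have "y \<in> \<rat>" unfolding d(3) cphi_def by (intro Rats_divide Rats_add) auto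
    then show False using assms(2) by simp
  qed
  then have "0 \<le> z" "z < 1"
    using d(2) attractor_subset by (auto simp: less_eq_real_def)
  moreover have "real N * y = z + real d"
    using d(3) N_pos by (simp add: cphi_def)
  ultimately have "\<lfloor>real N * y\<rfloor> = int d"
    by (intro floor_unique) auto
  then have "adic_digit N y = d" "adic_shift N y = z"
    using \<open>real N * y = z + real d\<close> by (simp_all add: adic_digit_def adic_shift_def)
  then show ?thesis using d by simp
qed

lemma orbit_in_attractor:
  assumes "x \<in> attractor" "x \<notin> \<rat>"
  shows "adic_orbit N x k \<in> attractor \<and> adic_digit N (adic_orbit N x k) \<in> D"
proof (induction k)
  case 0
  show ?case using attractor_digit_shift assms by simp
next
  case (Suc k)
  have irrational: "adic_orbit N x j \<notin> \<rat>" for j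
    using assms(2) N_ge_3 by (intro adic_orbit_irrational) auto
  then have "adic_orbit N x (Suc k) \<in> attractor"
    using Suc attractor_digit_shift[of "adic_orbit N x k"] by simp
  then show ?case using attractor_digit_shift irrational by blast
qed

lemma mem_attractor_if_digits:
  assumes "y \<in> {0..<1}" "\<And>k. adic_digit N (adic_orbit N y k) \<in> D"
  shows "y \<in> attractor"
proof -
  define K where "K = {y \<in> {0..<1}. \<forall>k. adic_digit N (adic_orbit N y k) \<in> D}"
  have "K \<subseteq> (\<Union>d\<in>D. cphi B d ` K)"
  proof
    fix y assume y: "y \<in> K"
    then have "adic_digit N (adic_orbit N (adic_shift N y) k) \<in> D" for k
      unfolding K_def adic_orbit_shift by blast
    then have "adic_shift N y \<in> K"
      unfolding K_def using adic_shift_range[of N y] by simp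
    moreover have "adic_digit N y \<in> D" "y = cphi B (adic_digit N y) (adic_shift N y)"
      using y cphi_digit_shift[of y] unfolding K_def by (auto dest: spec[of _ 0])
    ultimately show "y \<in> (\<Union>d\<in>D. cphi B d ` K)" by blast
  qed
  moreover have "bounded K" unfolding K_def by (rule bounded_subset[of "{0..1}"]) auto
  moreover have "cphi B d ` attractor \<subseteq> attractor" if "d \<in> D" for d
    using that attractor_self_similar by blast
  ultimately have "K \<subseteq> attractor"
    by (rule subset_if_invariant) (simp_all add: attractor_nonempty compact_attractor compact_imp_closed)
  then show ?thesis using assms unfolding K_def by blast
qed

section \<open>The distribution function along base-N expansions\<close>

lemma F_digit_expansion:
  assumes "0 \<le> y"
  shows "real m * F y =
    real (rank (adic_digit N y)) + (if adic_digit N y \<in> D then F (adic_shift N y) else 0)"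
proof -
  let ?a = "adic_digit N y"
  have bounds: "real ?a \<le> real N * y" "real N * y < real ?a + 1"
    using adic_digit_bounds[OF assms] by simp_all
  have F_branch: "F (real N * y - real d) =
      (if d < ?a then 1 else 0) + (if d = ?a then F (adic_shift N y) else 0)" for d
  proof (cases d ?a rule: linorder_cases)
    case less
    then have "1 \<le> real N * y - real d" using bounds by linarith
    then show ?thesis using less F_ge_1 by simp
  next
    case equal
    then show ?thesis using adic_shift_eq[OF assms] by simp
  next
    case greater
    then have "real N * y - real d \<le> 0" using bounds by linarith
    then show ?thesis using greater F_nonpos by simp
  qed
  have "real m * F y = (\<Sum>d\<in>D. F (real N * y - real d))"
    using self_sim_F by (rule self_sim_fixpoint_sum)
  also have "\<dots> = (\<Sum>d\<in>D. if d < ?a then 1 else 0) +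
      (\<Sum>d\<in>D. if d = ?a then F (adic_shift N y) else 0)"
    unfolding F_branch by (rule sum.distrib)
  also have "\<dots> = real (rank ?a) + (if ?a \<in> D then F (adic_shift N y) else 0)"
    using finite_digits by (simp add: rank_def sum.If_cases Int_def)
  finally show ?thesis .
qed

lemma F_rational_if_digit_outside:
  assumes "0 \<le> y" "adic_digit N (adic_orbit N y k) \<notin> D"
  shows "F y \<in> \<rat>"
  using assms
proof (induction k arbitrary: y)
  case 0
  then have "F y = real (rank (adic_digit N y)) / real m"
    using F_digit_expansion m_pos by (simp add: field_simps)
  then show ?case by simp
next
  case (Suc k)
  have "adic_digit N (adic_orbit N (adic_shift N y) k) \<notin> D"
    unfolding adic_orbit_shift using Suc.prems(2) .
  then have "F (adic_shift N y) \<in> \<rat>"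
    using Suc.IH adic_shift_range[of N y] by simp
  moreover have "F y =
      (real (rank (adic_digit N y)) + (if adic_digit N y \<in> D then F (adic_shift N y) else 0)) / real m"
    using F_digit_expansion[OF Suc.prems(1)] m_pos by (simp add: field_simps)
  ultimately show ?case by simp
qed

lemma F_rational_if_not_mem_attractor:
  assumes "y \<in> {0..<1}" "y \<notin> attractor"
  shows "F y \<in> \<rat>"
proof -
  obtain k where "adic_digit N (adic_orbit N y k) \<notin> D"
    using assms mem_attractor_if_digits by blast
  then show ?thesis using assms(1) by (intro F_rational_if_digit_outside) auto
qed

lemma attractor_irrational_atLeastLessThan:
  assumes "x \<in> attractor" "x \<notin> \<rat>"
  shows "x \<in> {0..<1}"
  using assms attractor_subset by (cases "x = 1") auto

lemma F_orbit_step: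
  assumes "x \<in> attractor" "x \<notin> \<rat>"
  shows "real m * F (adic_orbit N x k) =
    real (rank (adic_digit N (adic_orbit N x k))) + F (adic_orbit N x (Suc k))"
  using F_digit_expansion[of "adic_orbit N x k"] orbit_in_attractor[OF assms, of k] attractor_subset
  by auto

lemma rank_digits_not_eventually_periodic:
  assumes "x \<in> attractor" "x \<notin> \<rat>" "i < j"
  shows "\<exists>t. rank (adic_digit N (adic_orbit N x (i + t))) \<noteq>
    rank (adic_digit N (adic_orbit N x (j + t)))"
proof -
  obtain t where "adic_digit N (adic_orbit N x (i + t)) \<noteq> adic_digit N (adic_orbit N x (j + t))"
    using adic_digits_not_eventually_periodic[of N x i j] N_ge_3 assms
      attractor_irrational_atLeastLessThan by auto
  then show ?thesis
    using orbit_in_attractor[OF assms(1,2)] inj_onD[OF rank_inj] by blast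
qed

lemma F_orbit_strictly_between:
  assumes "x \<in> attractor" "x \<notin> \<rat>"
  shows "0 < F (adic_orbit N x k) \<and> F (adic_orbit N x k) < 1"
proof -
  define v where "v k = F (adic_orbit N x k)" for k
  define r where "r k = rank (adic_digit N (adic_orbit N x k))" for k
  have step: "real m * v k = real (r k) + v (Suc k)" for k
    unfolding v_def r_def by (rule F_orbit_step[OF assms])
  have r_le: "real (r k) \<le> real m - 1" for k
  proof -
    have "r k + 1 \<le> m"
      using rank_less orbit_in_attractor[OF assms] unfolding r_def by (simp add: Suc_le_eq)
    then have "real (r k + 1) \<le> real m" by (rule of_nat_mono)
    then show ?thesis by simp
  qed
  have v_range: "0 \<le> v k \<and> v k \<le> 1" for k
    unfolding v_def using F_range .
  \<comment> \<open>at the values 0 and 1 the recursion is stuck and forces a constant rank sequence\<close>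
  have stuck: "v (Suc j) = v j \<and> real (r j) = (real m - 1) * v j" if "v j \<in> {0, 1}" for j
    using that step[of j] r_le[of j] v_range[of "Suc j"] by (intro expansion_step_at_endpoint) auto
  have "v k \<notin> {0, 1}"
  proof
    assume "v k \<in> {0, 1}"
    then have "v (k + t) = v k" for t
    proof (induction t)
      case (Suc t)
      then show ?case using stuck[of "k + t"] \<open>v k \<in> {0, 1}\<close> by simp
    qed simp
    then have "r (k + t) = r (Suc k + t)" for t
      using stuck[of "k + t"] stuck[of "Suc k + t"] \<open>v k \<in> {0, 1}\<close> by simp
    then show False
      using rank_digits_not_eventually_periodic[OF assms, of k "Suc k"] unfolding r_def by auto
  qed
  then show ?thesis using v_range[of k] unfolding v_def by auto
qed

lemma F_irrational_if_mem_attractor: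
  assumes "x \<in> attractor" "x \<notin> \<rat>"
  shows "F x \<notin> \<rat>"
proof
  assume "F x \<in> \<rat>"
  then obtain i j where "i < j" and "\<forall>t. int (rank (adic_digit N (adic_orbit N x (i + t)))) =
      int (rank (adic_digit N (adic_orbit N x (j + t))))"
    using eventually_periodic_if_rational[of "\<lambda>k. F (adic_orbit N x k)" m
        "\<lambda>k. int (rank (adic_digit N (adic_orbit N x k)))"]
      F_orbit_strictly_between[OF assms] F_orbit_step[OF assms] by auto
  then show False
    using rank_digits_not_eventually_periodic[OF assms] by auto
qed

end

theorem lemma2p7:
  fixes B :: "nat list" and x :: real
  assumes "cantor_vec B"
    and "x \<in> {0..1}" and "x \<notin> \<rat>"
  shows "x \<in> cantor_set B \<longleftrightarrow> cantor_cdf B x \<notin> \<rat>"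
proof -
  interpret cantor_system B by (rule cantor_system.intro) fact
  have "x \<in> {0..<1}" using assms(2,3) by (cases "x = 1") auto
  moreover have "cantor_cdf B x = F x"
    using \<open>x \<in> {0..<1}\<close> by (intro cantor_cdf_eq_F) simp
  ultimately show ?thesis
    unfolding cantor_set_eq_attractor
    using F_irrational_if_mem_attractor F_rational_if_not_mem_attractor assms(3) by auto
qed

end
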